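(* Let $\Gamma$ be a finite connected $4$-valent graph whose automorphism group is transitive on $2$-arcs, and suppose the girth of $\Gamma$ is at most $4$. Then one of the following holds: (1) $\Gamma$ has girth $3$ and $\Gamma\cong K_5$; (2) $\Gamma$ has girth $4$ and $\Gamma\cong K_{4,4}\cong C(4,1)$; (3) $\Gamma$ has girth $4$ and $\Gamma$ is isomorphic to $K_{5,5}-5K_2$, to $Q_4$, or to $BCH$.
   Context: A $2$-arc is a sequence $(v_0,v_1,v_2)$ of vertices with $v_0\sim v_1\sim v_2$ and $v_0\ne v_2$. $K_{5,5}-5K_2$ is the complete bipartite graph $K_{5,5}$ with a perfect matching removed. $Q_4$ is the $4$-dimensional hypercube, i.e. the Cayley graph of $\mathbb{Z}_2^4$ with respect to the four standard basis vectors. $BCH$ (bipartite complement of the Heawood graph) has as vertices the $7$ points and $7$ lines of the Fano plane, a point $p$ being adjacent to a line $L$ iff $p\notin L$. $C(4,1)$ is the lexicographic product of a $4$-cycle with the edgeless graph on $2$ vertices. *)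

theory Defs
  imports Main "HOL-Library.Extended_Nat"
begin

definition fin_graph :: "'a set \<Rightarrow> ('a \<Rightarrow> 'a \<Rightarrow> bool) \<Rightarrow> bool" where
  "fin_graph V E \<longleftrightarrow> finite V \<and> V \<noteq> {} \<and> (\<forall>x y. E x y \<longrightarrow> x \<in> V \<and> y \<in> V)
     \<and> (\<forall>x y. E x y \<longrightarrow> E y x) \<and> (\<forall>x. \<not> E x x)"

definition regular :: "'a set \<Rightarrow> ('a \<Rightarrow> 'a \<Rightarrow> bool) \<Rightarrow> nat \<Rightarrow> bool" where
  "regular V E k \<longleftrightarrow> (\<forall>v\<in>V. card {u. E v u} = k)"

definition connected_graph :: "'a set \<Rightarrow> ('a \<Rightarrow> 'a \<Rightarrow> bool) \<Rightarrow> bool" where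
  "connected_graph V E \<longleftrightarrow> (\<forall>u\<in>V. \<forall>v\<in>V. E\<^sup>*\<^sup>* u v)"

definition graph_aut :: "'a set \<Rightarrow> ('a \<Rightarrow> 'a \<Rightarrow> bool) \<Rightarrow> ('a \<Rightarrow> 'a) \<Rightarrow> bool" where
  "graph_aut V E f \<longleftrightarrow> bij_betw f V V \<and> (\<forall>x\<in>V. \<forall>y\<in>V. E x y \<longleftrightarrow> E (f x) (f y))"

definition two_arc :: "('a \<Rightarrow> 'a \<Rightarrow> bool) \<Rightarrow> 'a \<Rightarrow> 'a \<Rightarrow> 'a \<Rightarrow> bool" where
  "two_arc E a b c \<longleftrightarrow> E a b \<and> E b c \<and> a \<noteq> c"

definition two_arc_transitive :: "'a set \<Rightarrow> ('a \<Rightarrow> 'a \<Rightarrow> bool) \<Rightarrow> bool" where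
  "two_arc_transitive V E \<longleftrightarrow>
     (\<forall>a b c a' b' c'. two_arc E a b c \<longrightarrow> two_arc E a' b' c' \<longrightarrow>
        (\<exists>f. graph_aut V E f \<and> f a = a' \<and> f b = b' \<and> f c = c'))"

definition is_cycle :: "'a set \<Rightarrow> ('a \<Rightarrow> 'a \<Rightarrow> bool) \<Rightarrow> nat \<Rightarrow> (nat \<Rightarrow> 'a) \<Rightarrow> bool" where
  "is_cycle V E n c \<longleftrightarrow> 3 \<le> n \<and> inj_on c {..<n} \<and>
     (\<forall>i<n. c i \<in> V \<and> E (c i) (c (Suc i mod n)))"

text \<open>Girth: length of a shortest cycle (infinity for acyclic graphs).\<close>
definition girth :: "'a set \<Rightarrow> ('a \<Rightarrow> 'a \<Rightarrow> bool) \<Rightarrow> enat" where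
  "girth V E = (INF n \<in> {n. \<exists>c. is_cycle V E n c}. enat n)"

definition graph_iso :: "'a set \<Rightarrow> ('a \<Rightarrow> 'a \<Rightarrow> bool) \<Rightarrow> 'b set \<Rightarrow> ('b \<Rightarrow> 'b \<Rightarrow> bool) \<Rightarrow> bool" where
  "graph_iso V E W F \<longleftrightarrow>
     (\<exists>f. bij_betw f V W \<and> (\<forall>x\<in>V. \<forall>y\<in>V. E x y \<longleftrightarrow> F (f x) (f y)))"

definition K5_V :: "nat set" where "K5_V = {..<5}"
definition K5_E :: "nat \<Rightarrow> nat \<Rightarrow> bool" where "K5_E x y \<longleftrightarrow> x < 5 \<and> y < 5 \<and> x \<noteq> y"

definition K44_V :: "(bool \<times> nat) set" where "K44_V = UNIV \<times> {..<4}"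
definition K44_E :: "bool \<times> nat \<Rightarrow> bool \<times> nat \<Rightarrow> bool" where
  "K44_E x y \<longleftrightarrow> snd x < 4 \<and> snd y < 4 \<and> fst x \<noteq> fst y"

text \<open>K_{5,5} minus the perfect matching {(False,i),(True,i)}\<close>
definition K55m_V :: "(bool \<times> nat) set" where "K55m_V = UNIV \<times> {..<5}"
definition K55m_E :: "bool \<times> nat \<Rightarrow> bool \<times> nat \<Rightarrow> bool" where
  "K55m_E x y \<longleftrightarrow> snd x < 5 \<and> snd y < 5 \<and> fst x \<noteq> fst y \<and> snd x \<noteq> snd y"

text \<open>Q_4: Cayley graph of Z_2^4 w.r.t. the standard basis; vertices are boolean lists of
  length 4, adjacent iff they differ in exactly one coordinate.\<close>
definition Q4_V :: "bool list set" where "Q4_V = {xs. length xs = 4}"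
definition Q4_E :: "bool list \<Rightarrow> bool list \<Rightarrow> bool" where
  "Q4_E xs ys \<longleftrightarrow> length xs = 4 \<and> length ys = 4 \<and> card {i. i < 4 \<and> xs ! i \<noteq> ys ! i} = 1"

text \<open>Fano plane: points 0..6, lines 0..6, line l = {l, l+1, l+3} mod 7.\<close>
definition fano_inc :: "nat \<Rightarrow> nat \<Rightarrow> bool" where
  "fano_inc p l \<longleftrightarrow> p \<in> {l mod 7, (l + 1) mod 7, (l + 3) mod 7}"

definition BCH_V :: "(bool \<times> nat) set" where "BCH_V = UNIV \<times> {..<7}"
definition BCH_E :: "bool \<times> nat \<Rightarrow> bool \<times> nat \<Rightarrow> bool" where
  "BCH_E x y \<longleftrightarrow> snd x < 7 \<and> snd y < 7 \<and>
     ((\<not> fst x \<and> fst y \<and> \<not> fano_inc (snd x) (snd y)) \<or>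
      (fst x \<and> \<not> fst y \<and> \<not> fano_inc (snd y) (snd x)))"

text \<open>C(4,1) = C_4[2K_1]: vertices (i,a), i in Z_4, a in {False,True};
  (i,a) ~ (j,b) iff i, j are adjacent in the 4-cycle.\<close>
definition C41_V :: "(nat \<times> bool) set" where "C41_V = {..<4} \<times> UNIV"
definition C41_E :: "nat \<times> bool \<Rightarrow> nat \<times> bool \<Rightarrow> bool" where
  "C41_E x y \<longleftrightarrow> fst x < 4 \<and> fst y < 4 \<and>
     (fst y = (fst x + 1) mod 4 \<or> fst x = (fst y + 1) mod 4)"

end

theory Submission
  imports Defs
begin

text \<open>In a 2-arc-transitive graph all 2-arcs (a, b, c) look alike: whether a and c are
  adjacent, and the number m of common neighbours of a and c, do not depend on the 2-arc.
  If some 2-arc lies in a triangle, any two neighbours of a vertex are adjacent and the graph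
  is K5. Otherwise there is a 4-cycle, so 2 \<le> m \<le> 4, and the graph can be rebuilt layer by
  layer around a vertex v with neighbours a1, ..., a4. For m = 4 this gives K4,4 = C(4,1),
  for m = 3 the graph K5,5 minus a perfect matching. For m = 2 let u_ij be the second common
  neighbour of a_i and a_j; the graph is Q4 if some vertex at distance three from v is
  adjacent to u12, u13 and u23, and BCH otherwise. In each case the labelling found is an
  injective homomorphism from the model graph, and it is onto because both graphs are
  connected and 4-regular.\<close>

section \<open>Isomorphisms and embeddings\<close>

lemma connected_graph_closed_subset:
  assumes "connected_graph V E" "S \<subseteq> V" "x \<in> S" and closed: "\<And>x y. x \<in> S \<Longrightarrow> E x y \<Longrightarrow> y \<in> S"
  shows "S = V"
proof -
  have "y \<in> S" if "E\<^sup>*\<^sup>* x y" for y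
    using that by (induction rule: rtranclp_induct) (use assms(3) closed in auto)
  then show ?thesis
    using assms(1-3) by (auto simp: connected_graph_def)
qed

lemma graph_iso_if_bij_betw:
  assumes "bij_betw g W V" and "\<And>x y. x \<in> W \<Longrightarrow> y \<in> W \<Longrightarrow> E (g x) (g y) \<longleftrightarrow> F x y"
  shows "graph_iso V E W F"
  unfolding graph_iso_def
proof (intro exI conjI ballI)
  show "bij_betw (inv_into W g) V W"
    using assms(1) by (rule bij_betw_inv_into)
  fix x y assume "x \<in> V" "y \<in> V"
  then have "inv_into W g x \<in> W" "inv_into W g y \<in> W"
    "g (inv_into W g x) = x" "g (inv_into W g y) = y"
    using assms(1) by (auto simp: bij_betw_def inv_into_into f_inv_into_f)
  then show "E x y \<longleftrightarrow> F (inv_into W g x) (inv_into W g y)"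
    using assms(2) by metis
qed

lemma graph_iso_trans:
  assumes "graph_iso V E W F" "graph_iso W F U G"
  shows "graph_iso V E U G"
proof -
  obtain f where f: "bij_betw f V W" "\<forall>x\<in>V. \<forall>y\<in>V. E x y \<longleftrightarrow> F (f x) (f y)"
    using assms(1) by (auto simp: graph_iso_def)
  obtain g where g: "bij_betw g W U" "\<forall>x\<in>W. \<forall>y\<in>W. F x y \<longleftrightarrow> G (g x) (g y)"
    using assms(2) by (auto simp: graph_iso_def)
  have "bij_betw (g \<circ> f) V U"
    using f(1) g(1) by (rule bij_betw_trans)
  moreover have "\<forall>x\<in>V. \<forall>y\<in>V. E x y \<longleftrightarrow> G ((g \<circ> f) x) ((g \<circ> f) y)"
    using f g bij_betw_apply[OF f(1)] by simp
  ultimately show ?thesis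
    unfolding graph_iso_def by blast
qed

text \<open>The image of an injective homomorphism between graphs of the same valency is closed
  under taking neighbours, hence it is everything when the target is connected.\<close>

lemma graph_iso_if_regular_embedding:
  assumes V: "fin_graph V E" "regular V E k" "connected_graph V E"
    and W: "fin_graph W F" "regular W F k"
    and g: "g ` W \<subseteq> V" "inj_on g W" and hom: "\<And>x y. F x y \<Longrightarrow> E (g x) (g y)"
  shows "graph_iso V E W F"
proof -
  have W_adj: "x \<in> W" "y \<in> W" if "F x y" for x y
    using W(1) that by (auto simp: fin_graph_def)
  have nbrs: "{z. E (g x) z} = g ` {y. F x y}" if "x \<in> W" for x
  proof (rule card_subset_eq[symmetric])
    show "finite {z. E (g x) z}"
      using V(1) by (auto simp: fin_graph_def intro: finite_subset[of _ V])
    show "g ` {y. F x y} \<subseteq> {z. E (g x) z}"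
      using hom by auto
    have "inj_on g {y. F x y}"
      using g(2) W_adj by (auto intro: inj_on_subset)
    then show "card (g ` {y. F x y}) = card {z. E (g x) z}"
      using that g(1) V(2) W(2) by (auto simp: regular_def card_image)
  qed
  have reflect: "E (g x) (g y) \<longleftrightarrow> F x y" if xy: "x \<in> W" "y \<in> W" for x y
  proof
    assume "E (g x) (g y)"
    then obtain y' where "F x y'" "g y = g y'"
      using nbrs[OF xy(1)] by auto
    then show "F x y"
      using g(2) xy W_adj by (metis inj_onD)
  qed (rule hom)
  obtain x where "x \<in> W"
    using W(1) by (auto simp: fin_graph_def)
  have "g ` W = V"
  proof (rule connected_graph_closed_subset[OF V(3) g(1)])
    show "g x \<in> g ` W"
      using \<open>x \<in> W\<close> by simp
    fix z y assume "z \<in> g ` W" "E z y"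
    then obtain x' where x': "x' \<in> W" "E (g x') y"
      by blast
    then have "y \<in> g ` {y. F x' y}"
      using nbrs[OF x'(1)] by (metis mem_Collect_eq)
    then show "y \<in> g ` W"
      using W_adj by blast
  qed
  then have "bij_betw g W V"
    using g(2) by (rule bij_betw_imageI[rotated])
  then show ?thesis
    using reflect by (rule graph_iso_if_bij_betw)
qed

lemma inj_on_two_rows:
  assumes "distinct (xs @ ys)" "length xs = n" "length ys = n"
  shows "inj_on (\<lambda>(b, i). if b then ys ! i else xs ! i) (UNIV \<times> {..<n})"
proof -
  have "xs ! i \<noteq> ys ! j" "ys ! j \<noteq> xs ! i" if "i < n" "j < n" for i j
    using assms that by (metis disjoint_iff distinct_append nth_mem)+
  then show ?thesis
    using assms by (auto simp: inj_on_def nth_eq_iff_index_eq)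
qed

lemma two_rows_image_subset:
  assumes "set xs \<subseteq> A" "set ys \<subseteq> A" "length xs = n" "length ys = n"
  shows "(\<lambda>(b, i). if b then ys ! i else xs ! i) ` (UNIV \<times> {..<n}) \<subseteq> A"
proof clarify
  fix b i assume "i < n"
  then have "xs ! i \<in> set xs" "ys ! i \<in> set ys"
    using assms(3,4) by simp_all
  then show "(if b then ys ! i else xs ! i) \<in> A"
    using assms(1,2) by auto
qed

section \<open>The target graphs\<close>

lemma card_Collect_less_Suc:
  "card {i. i < Suc n \<and> P i} = card {i. i < n \<and> P i} + (if P n then 1 else 0)"
proof -
  have "{i. i < Suc n \<and> P i} = {i. i < n \<and> P i} \<union> (if P n then {n} else {})"
    by (auto simp: less_Suc_eq)
  then show ?thesis
    by (auto simp: card_insert_if)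
qed

lemma numeral_4_eq_Suc: "(4 :: nat) = Suc (Suc (Suc (Suc 0)))"
  by simp

lemma numeral_7_eq_Suc: "(7 :: nat) = Suc (Suc (Suc (Suc (Suc (Suc (Suc 0))))))"
  by simp

lemma fin_graph_K5: "fin_graph K5_V K5_E"
  by (auto simp: fin_graph_def K5_V_def K5_E_def lessThan_empty_iff)

lemma regular_K5: "regular K5_V K5_E 4"
proof -
  have "{y. K5_E x y} = {..<5} - {x}" if "x \<in> K5_V" for x
    using that by (auto simp: K5_E_def K5_V_def)
  then show ?thesis
    by (auto simp: regular_def K5_V_def)
qed

lemma fin_graph_K44: "fin_graph K44_V K44_E"
  by (auto simp: fin_graph_def K44_V_def K44_E_def lessThan_empty_iff)

lemma regular_K44: "regular K44_V K44_E 4"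
proof -
  have "{y. K44_E x y} = {\<not> fst x} \<times> {..<4}" if "x \<in> K44_V" for x
    using that by (auto simp: K44_E_def K44_V_def)
  then show ?thesis
    by (simp add: regular_def card_cartesian_product)
qed

lemma graph_iso_K44_C41: "graph_iso K44_V K44_E C41_V C41_E"
proof (rule graph_iso_if_bij_betw)
  let ?g = "\<lambda>(l, e). (odd l, 2 * (l div 2) + of_bool e)"
  have lt4: "l < 4 \<longleftrightarrow> l = 0 \<or> l = 1 \<or> l = 2 \<or> l = 3" for l :: nat
    by presburger
  show "bij_betw ?g C41_V K44_V"
  proof (rule bij_betw_imageI)
    show "inj_on ?g C41_V"
      by (auto simp: inj_on_def C41_V_def lt4)
    show "?g ` C41_V = K44_V"
    proof
      show "?g ` C41_V \<subseteq> K44_V"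
        by (auto simp: C41_V_def K44_V_def lt4)
      show "K44_V \<subseteq> ?g ` C41_V"
      proof clarify
        fix b i assume "(b, i) \<in> K44_V"
        then have "(b, i) = ?g (2 * (i div 2) + of_bool b, odd i)" "(2 * (i div 2) + of_bool b, odd i) \<in> C41_V"
          by (auto simp: K44_V_def C41_V_def lt4)
        then show "(b, i) \<in> ?g ` C41_V"
          by blast
      qed
    qed
  qed
  show "K44_E (?g x) (?g y) \<longleftrightarrow> C41_E x y" if "x \<in> C41_V" "y \<in> C41_V" for x y
    using that by (auto simp: C41_V_def K44_E_def C41_E_def lt4)
qed

lemma fin_graph_K55m: "fin_graph K55m_V K55m_E"
  by (auto simp: fin_graph_def K55m_V_def K55m_E_def lessThan_empty_iff)

lemma regular_K55m: "regular K55m_V K55m_E 4"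
proof -
  have "{y. K55m_E x y} = {\<not> fst x} \<times> ({..<5} - {snd x})" if "x \<in> K55m_V" for x
    using that by (auto simp: K55m_E_def K55m_V_def)
  then show ?thesis
    by (auto simp: regular_def K55m_V_def card_cartesian_product)
qed

lemma fin_graph_BCH: "fin_graph BCH_V BCH_E"
  by (auto simp: fin_graph_def BCH_V_def BCH_E_def lessThan_empty_iff)

lemma card_lines_avoiding: "p < 7 \<Longrightarrow> card {l. l < 7 \<and> \<not> fano_inc p l} = 4"
  and card_points_avoiding: "l < 7 \<Longrightarrow> card {p. p < 7 \<and> \<not> fano_inc p l} = 4"
proof -
  have lt7: "i < 7 \<Longrightarrow> i = 0 \<or> i = 1 \<or> i = 2 \<or> i = 3 \<or> i = 4 \<or> i = 5 \<or> i = 6" for i :: nat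
    by auto
  show "p < 7 \<Longrightarrow> card {l. l < 7 \<and> \<not> fano_inc p l} = 4"
    by (drule lt7, elim disjE; hypsubst; simp only: numeral_7_eq_Suc card_Collect_less_Suc; simp add: fano_inc_def)
  show "l < 7 \<Longrightarrow> card {p. p < 7 \<and> \<not> fano_inc p l} = 4"
    by (drule lt7, elim disjE; hypsubst; simp only: numeral_7_eq_Suc card_Collect_less_Suc; simp add: fano_inc_def)
qed

lemma regular_BCH: "regular BCH_V BCH_E 4"
  unfolding regular_def
proof
  fix x assume "x \<in> BCH_V"
  then obtain b i where x: "x = (b, i)" "i < 7"
    by (auto simp: BCH_V_def)
  show "card {y. BCH_E x y} = 4"
  proof (cases b)
    case True
    then have "{y. BCH_E x y} = {False} \<times> {p. p < 7 \<and> \<not> fano_inc p i}"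
      using x by (auto simp: BCH_E_def)
    then show ?thesis
      using card_points_avoiding[OF x(2)] by (simp add: card_cartesian_product)
  next
    case False
    then have "{y. BCH_E x y} = {True} \<times> {l. l < 7 \<and> \<not> fano_inc i l}"
      using x by (auto simp: BCH_E_def)
    then show ?thesis
      using card_lines_avoiding[OF x(2)] by (simp add: card_cartesian_product)
  qed
qed

lemma length_4_iff: "length xs = 4 \<longleftrightarrow> (\<exists>a b c d. xs = [a, b, c, d])"
  by (auto simp: length_Suc_conv numeral_eq_Suc)

lemma Q4_E_iff:
  "Q4_E [a, b, c, d] ys \<longleftrightarrow> ys \<in> {[\<not> a, b, c, d], [a, \<not> b, c, d], [a, b, \<not> c, d], [a, b, c, \<not> d]}"
proof -
  have "Q4_E [a, b, c, d] [e, f, g, h] \<longleftrightarrow>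
      of_bool (a \<noteq> e) + of_bool (b \<noteq> f) + of_bool (c \<noteq> g) + of_bool (d \<noteq> h) = (1 :: nat)" for e f g h
    unfolding Q4_E_def by (simp only: card_Collect_less_Suc numeral_4_eq_Suc) simp
  then have "Q4_E [a, b, c, d] [e, f, g, h] \<longleftrightarrow>
      [e, f, g, h] \<in> {[\<not> a, b, c, d], [a, \<not> b, c, d], [a, b, \<not> c, d], [a, b, c, \<not> d]}" for e f g h
    by (cases a; cases b; cases c; cases d; cases e; cases f; cases g; cases h) simp_all
  moreover have "length ys = 4" if "Q4_E [a, b, c, d] ys \<or> ys \<in> {[\<not> a, b, c, d], [a, \<not> b, c, d], [a, b, \<not> c, d], [a, b, c, \<not> d]}"
    using that by (auto simp: Q4_E_def)
  ultimately show ?thesis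
    unfolding length_4_iff by metis
qed

lemma fin_graph_Q4: "fin_graph Q4_V Q4_E"
proof -
  have "finite Q4_V"
    using finite_lists_length_eq[of "UNIV :: bool set" 4] by (simp add: Q4_V_def)
  moreover have "Q4_V \<noteq> {}"
    unfolding Q4_V_def by (metis (mono_tags) empty_Collect_eq length_replicate)
  moreover have "{i. i < 4 \<and> xs ! i \<noteq> ys ! i} = {i. i < 4 \<and> ys ! i \<noteq> xs ! i}" for xs ys :: "bool list"
    by auto
  ultimately show ?thesis
    unfolding fin_graph_def by (auto simp: Q4_V_def Q4_E_def)
qed

lemma regular_Q4: "regular Q4_V Q4_E 4"
  unfolding regular_def
proof
  fix x assume "x \<in> Q4_V"
  then obtain a b c d where "x = [a, b, c, d]"
    by (auto simp: Q4_V_def length_4_iff)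
  then have "{y. Q4_E x y} = {[\<not> a, b, c, d], [a, \<not> b, c, d], [a, b, \<not> c, d], [a, b, c, \<not> d]}"
    by (auto simp: Q4_E_iff)
  then show "card {y. Q4_E x y} = 4"
    by simp
qed

definition binary_value :: "bool list \<Rightarrow> nat" where
  "binary_value = foldl (\<lambda>n b. 2 * n + of_bool b) 0"

lemma binary_value_4:
  "binary_value [a, b, c, d] = 8 * of_bool a + 4 * of_bool b + 2 * of_bool c + of_bool d"
  by (simp add: binary_value_def)

lemma binary_value_4_bits:
  "binary_value [a, b, c, d] div 8 = of_bool a" "binary_value [a, b, c, d] div 4 mod 2 = of_bool b"
  "binary_value [a, b, c, d] div 2 mod 2 = of_bool c" "binary_value [a, b, c, d] mod 2 = of_bool d"
  unfolding binary_value_4 by (cases a; cases b; cases c; cases d; simp)+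

lemma inj_on_binary_value_Q4: "inj_on binary_value Q4_V"
  and binary_value_Q4: "binary_value ` Q4_V \<subseteq> {..<16}"
proof -
  have Q4: "\<exists>a b c d. x = [a, b, c, d]" if "x \<in> Q4_V" for x
    using that by (simp add: Q4_V_def length_4_iff)
  show "inj_on binary_value Q4_V"
  proof (rule inj_onI)
    fix x y assume xy: "x \<in> Q4_V" "y \<in> Q4_V" "binary_value x = binary_value y"
    obtain a b c d where "x = [a, b, c, d]"
      using Q4[OF xy(1)] by auto
    moreover obtain e f g h where "y = [e, f, g, h]"
      using Q4[OF xy(2)] by auto
    ultimately show "x = y"
      using binary_value_4_bits[of a b c d] binary_value_4_bits[of e f g h] xy(3) by (simp add: of_bool_eq_iff)
  qed
  show "binary_value ` Q4_V \<subseteq> {..<16}"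
  proof clarify
    fix x assume "x \<in> Q4_V"
    from Q4[OF this] obtain a b c d where "x = [a, b, c, d]"
      by auto
    then show "binary_value x < 16"
      by (cases a; cases b; cases c; cases d) (simp_all add: binary_value_4)
  qed
qed

definition common_nbrs :: "('a \<Rightarrow> 'a \<Rightarrow> bool) \<Rightarrow> 'a \<Rightarrow> 'a \<Rightarrow> 'a set" where
  "common_nbrs E x z = {w. E x w \<and> E w z}"

lemma graph_aut_image_common_nbrs:
  assumes "fin_graph V E" "graph_aut V E f" "x \<in> V" "z \<in> V"
  shows "f ` common_nbrs E x z = common_nbrs E (f x) (f z)"
proof -
  have surj: "f ` V = V" and adj: "\<And>x y. x \<in> V \<Longrightarrow> y \<in> V \<Longrightarrow> E x y \<longleftrightarrow> E (f x) (f y)"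
    using assms(2) by (auto simp: graph_aut_def bij_betw_def)
  have in_V: "y \<in> V" if "E x y" for x y
    using assms(1) that by (auto simp: fin_graph_def)
  show ?thesis
  proof
    show "f ` common_nbrs E x z \<subseteq> common_nbrs E (f x) (f z)"
    proof
      fix w' assume "w' \<in> f ` common_nbrs E x z"
      then obtain w where w: "E x w" "E w z" "w' = f w"
        by (auto simp: common_nbrs_def)
      then have "w \<in> V"
        using in_V by blast
      then show "w' \<in> common_nbrs E (f x) (f z)"
        using w adj[of x w] adj[of w z] assms(3,4) by (simp add: common_nbrs_def)
    qed
    show "common_nbrs E (f x) (f z) \<subseteq> f ` common_nbrs E x z"
    proof
      fix w' assume w': "w' \<in> common_nbrs E (f x) (f z)"
      then have "w' \<in> f ` V"
        using surj in_V unfolding common_nbrs_def by blast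
      then obtain w where "w \<in> V" "w' = f w"
        by blast
      then show "w' \<in> f ` common_nbrs E x z"
        using w' adj[of x w] adj[of w z] assms(3,4) by (simp add: common_nbrs_def)
    qed
  qed
qed

lemma two_arc_transitive_invariants:
  assumes "fin_graph V E" "two_arc_transitive V E" "two_arc E a b c" "two_arc E a' b' c'"
  shows "E a' c' \<longleftrightarrow> E a c" and "card (common_nbrs E a' c') = card (common_nbrs E a c)"
proof -
  obtain f where f: "graph_aut V E f" "f a = a'" "f c = c'"
    using assms(2-4) unfolding two_arc_transitive_def by blast
  have V: "a \<in> V" "c \<in> V" "common_nbrs E a c \<subseteq> V"
    using assms(1,3) by (auto simp: fin_graph_def two_arc_def common_nbrs_def)
  then show "E a' c' \<longleftrightarrow> E a c"
    using f by (auto simp: graph_aut_def)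
  have "inj_on f (common_nbrs E a c)"
    using f(1) V(3) by (auto simp: graph_aut_def bij_betw_def intro: inj_on_subset)
  then show "card (common_nbrs E a' c') = card (common_nbrs E a c)"
    using graph_aut_image_common_nbrs[OF assms(1) f(1) V(1,2)] f by (metis card_image)
qed

lemma cycle_of_length_le_4:
  assumes "girth V E \<le> 4"
  obtains n c where "is_cycle V E n c" "n \<le> 4"
proof -
  have "\<exists>n c. is_cycle V E n c \<and> n \<le> 4"
  proof (rule ccontr)
    assume "\<not> ?thesis"
    then have "enat 5 \<le> enat n" if "is_cycle V E n c" for n c
      using that by force
    then have "enat 5 \<le> girth V E"
      unfolding girth_def by (blast intro: INF_greatest)
    then show False
      using assms order_trans[of "enat 5" "girth V E" "enat 4"] by (simp add: numeral_eq_enat)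
  qed
  then show ?thesis
    using that by blast
qed

lemma girth_eqI:
  assumes "is_cycle V E k c" and "\<And>n c. is_cycle V E n c \<Longrightarrow> k \<le> n"
  shows "girth V E = enat k"
  unfolding girth_def using assms
  by (intro antisym INF_lower2[of k] INF_greatest) (auto simp: numeral_eq_enat)

lemma All_less_3: "(\<forall>i < 3 :: nat. P i) \<longleftrightarrow> P 0 \<and> P 1 \<and> P 2"
  by (auto simp: less_Suc_eq numeral_eq_Suc)

lemma lessThan_3: "{..<3 :: nat} = {0, 1, 2}"
  by (auto simp: numeral_3_eq_3 lessThan_Suc)

lemma lessThan_4: "{..<4 :: nat} = {0, 1, 2, 3}"
  by (auto simp: numeral_eq_Suc lessThan_Suc)

lemma square_if_is_cycle_4:
  assumes "is_cycle V E 4 c"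
  shows "distinct [c 0, c 1, c 2, c 3] \<and> E (c 0) (c 1) \<and> E (c 1) (c 2) \<and> E (c 2) (c 3) \<and> E (c 3) (c 0)"
proof -
  have inj: "inj_on c {0, 1, 2, 3}" and adj: "\<And>i. i < 4 \<Longrightarrow> E (c i) (c (Suc i mod 4))"
    using assms by (auto simp: is_cycle_def lessThan_4)
  have "E (c 0) (c 1)" "E (c 2) (c 3)" "E (c 3) (c 0)"
    using adj[of 0] adj[of 2] adj[of 3] by simp_all
  moreover have "E (c 1) (c 2)"
    using adj[of 1] by (simp add: numeral_2_eq_2)
  moreover have "distinct [c 0, c 1, c 2, c 3]"
    using inj unfolding inj_on_def by auto
  ultimately show ?thesis
    by blast
qed

lemma is_cycle_3I:
  "distinct [x, y, z] \<Longrightarrow> {x, y, z} \<subseteq> V \<Longrightarrow> E x y \<Longrightarrow> E y z \<Longrightarrow> E z x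
    \<Longrightarrow> is_cycle V E 3 (nth [x, y, z])"
  unfolding is_cycle_def All_less_3 lessThan_3 by (auto simp: inj_on_def)

lemma triangle_if_is_cycle_3:
  "is_cycle V E 3 c \<Longrightarrow> E (c 0) (c 1) \<and> E (c 1) (c 2) \<and> E (c 2) (c 0)"
  unfolding is_cycle_def All_less_3 by (simp add: numeral_2_eq_2)

section \<open>Connected quartic graphs\<close>

locale quartic_graph =
  fixes V :: "'a set" and E :: "'a \<Rightarrow> 'a \<Rightarrow> bool"
  assumes graph: "fin_graph V E" and quartic: "regular V E 4" and connected: "connected_graph V E"
begin

lemma adj_sym: "E x y \<Longrightarrow> E y x"
  using graph by (auto simp: fin_graph_def)

lemma not_adj_self [simp]: "\<not> E x x"
  using graph by (auto simp: fin_graph_def)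

lemma adj_imp_neq: "E x y \<Longrightarrow> x \<noteq> y"
  by auto

lemma adj_in_V_left: "E x y \<Longrightarrow> x \<in> V"
  using graph by (auto simp: fin_graph_def)

lemma adj_in_V_right: "E x y \<Longrightarrow> y \<in> V"
  using graph by (auto simp: fin_graph_def)

lemma V_nonempty: "V \<noteq> {}"
  using graph by (auto simp: fin_graph_def)

lemma finite_nbrs: "finite {u. E x u}"
  using graph by (auto simp: fin_graph_def intro: finite_subset[of _ V])

lemma card_nbrs: "x \<in> V \<Longrightarrow> card {u. E x u} = 4"
  using quartic by (auto simp: regular_def)

lemma nbrs_eq:
  assumes "distinct [p, q, r, s]" "E x p" "E x q" "E x r" "E x s"
  shows "{u. E x u} = {p, q, r, s}"
proof -
  have "{p, q, r, s} \<subseteq> {u. E x u}" "card {p, q, r, s} = card {u. E x u}"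
    using assms card_nbrs[OF adj_in_V_left] by auto
  then show ?thesis
    using finite_nbrs by (metis card_subset_eq)
qed

lemma nbr_cases:
  "distinct [p, q, r, s] \<Longrightarrow> E x p \<Longrightarrow> E x q \<Longrightarrow> E x r \<Longrightarrow> E x s \<Longrightarrow> E x y
    \<Longrightarrow> y = p \<or> y = q \<or> y = r \<or> y = s"
  using nbrs_eq[of p q r s x] by auto

lemma obtain_nbrs:
  assumes "x \<in> V"
  obtains p q r s where "distinct [p, q, r, s]" "{u. E x u} = {p, q, r, s}"
proof -
  obtain p where p: "E x p"
    using card_nbrs[OF assms] by (metis Collect_empty_eq card.empty zero_neq_numeral)
  then have "card ({u. E x u} - {p}) = 3"
    using card_nbrs[OF assms] finite_nbrs by simp
  then obtain q r s where "{u. E x u} - {p} = {q, r, s}" "q \<noteq> r" "r \<noteq> s" "q \<noteq> s"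
    by (auto simp: card_3_iff)
  then show ?thesis
    using that[of p q r s] p by (metis (mono_tags) Diff_iff distinct_length_2_or_more
        distinct_singleton insert_Diff insert_iff mem_Collect_eq)
qed

lemma obtain_fourth_nbr:
  assumes "distinct [p, q, r]" "E x p" "E x q" "E x r"
  obtains s where "distinct [p, q, r, s]" "E x s"
proof -
  obtain a b c d where "distinct [a, b, c, d]" and N: "{u. E x u} = {a, b, c, d}"
    using obtain_nbrs adj_in_V_left assms(2) by blast
  moreover have "card {a, b, c, d} - card {p, q, r} \<le> card ({a, b, c, d} - {p, q, r})"
    by (rule diff_card_le_card_Diff) simp
  ultimately have "{a, b, c, d} - {p, q, r} \<noteq> {}"
    using assms(1) by auto
  then obtain s where "s \<in> {a, b, c, d}" "s \<notin> {p, q, r}"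
    by blast
  then show ?thesis
    using that[of s] N assms(1) by auto
qed

lemma obtain_other_nbrs:
  assumes "E x p"
  obtains q r s where "distinct [p, q, r, s]" "E x q" "E x r" "E x s"
proof -
  obtain a b c d where d: "distinct [a, b, c, d]" and N: "{u. E x u} = {a, b, c, d}"
    using obtain_nbrs adj_in_V_left assms by blast
  have "p \<in> {a, b, c, d}"
    using N assms by auto
  then show ?thesis
    using that d N by (smt (verit) distinct_length_2_or_more distinct_singleton insert_iff mem_Collect_eq)
qed


lemma finite_common_nbrs: "finite (common_nbrs E x z)"
  using finite_nbrs by (auto simp: common_nbrs_def intro: finite_subset)

lemma embedding_imp_graph_iso:
  "fin_graph W F \<Longrightarrow> regular W F 4 \<Longrightarrow> g ` W \<subseteq> V \<Longrightarrow> inj_on g W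
    \<Longrightarrow> (\<And>x y. F x y \<Longrightarrow> E (g x) (g y)) \<Longrightarrow> graph_iso V E W F"
  by (rule graph_iso_if_regular_embedding[OF graph quartic connected])


lemma girth_3_if_triangle:
  assumes "E x y" "E y z" "E z x"
  shows "girth V E = 3"
proof -
  have "girth V E = enat 3"
  proof (rule girth_eqI)
    show "is_cycle V E 3 (nth [x, y, z])"
      using assms adj_in_V_left adj_imp_neq by (intro is_cycle_3I) auto
    show "3 \<le> n" if "is_cycle V E n c" for n c
      using that by (simp add: is_cycle_def)
  qed
  then show ?thesis
    by (simp add: numeral_eq_enat)
qed

lemma girth_4_if_triangle_free:
  assumes "\<And>x y z. E x y \<Longrightarrow> E y z \<Longrightarrow> \<not> E x z" "is_cycle V E 4 c"
  shows "girth V E = 4"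
proof -
  have "girth V E = enat 4"
  proof (rule girth_eqI[OF assms(2)])
    show "4 \<le> n" if "is_cycle V E n c'" for n c'
    proof -
      have "n \<noteq> 3"
        using that triangle_if_is_cycle_3 assms(1) adj_sym by metis
      then show ?thesis
        using that by (simp add: is_cycle_def)
    qed
  qed
  then show ?thesis
    by (simp add: numeral_eq_enat)
qed

lemma graph_iso_K5_if_locally_complete:
  assumes complete: "\<And>a b c. E b a \<Longrightarrow> E b c \<Longrightarrow> a \<noteq> c \<Longrightarrow> E a c"
  shows "graph_iso V E K5_V K5_E"
proof -
  obtain v where "v \<in> V"
    using V_nonempty by blast
  then obtain a1 a2 a3 a4 where "distinct [a1, a2, a3, a4]" and N: "{u. E v u} = {a1, a2, a3, a4}"
    by (rule obtain_nbrs)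
  moreover have "E v a1" "E v a2" "E v a3" "E v a4"
    using N by auto
  moreover define xs where "xs = [v, a1, a2, a3, a4]"
  ultimately have xs: "distinct xs" "length xs = 5" "set xs \<subseteq> V"
    using \<open>v \<in> V\<close> adj_in_V_right by (auto simp: xs_def)
  have clique: "E x y" if "x \<in> set xs" "y \<in> set xs" "x \<noteq> y" for x y
  proof -
    have "x = v \<or> E v x" "y = v \<or> E v y"
      using that N by (auto simp: xs_def)
    then show ?thesis
      using that(3) complete[of v x y] adj_sym[of v x] by auto
  qed
  show ?thesis
  proof (rule embedding_imp_graph_iso[OF fin_graph_K5 regular_K5])
    show "nth xs ` K5_V \<subseteq> V"
      using xs by (auto simp: K5_V_def)
    show "inj_on (nth xs) K5_V"
      using xs by (auto simp: K5_V_def intro: inj_on_nth)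
    show "E (xs ! i) (xs ! j)" if "K5_E i j" for i j
      using that xs by (intro clique) (auto simp: K5_E_def nth_eq_iff_index_eq)
  qed
qed

lemma two_rows_embedding_imp_graph_iso:
  assumes F: "fin_graph (UNIV \<times> {..<n}) F" "regular (UNIV \<times> {..<n}) F 4"
    and bipartite: "\<And>x y. F x y \<Longrightarrow> fst x \<noteq> fst y"
    and rows: "distinct (xs @ ys)" "length xs = n" "length ys = n" "set xs \<subseteq> V" "set ys \<subseteq> V"
    and hom: "\<And>i j. F (False, i) (True, j) \<Longrightarrow> E (xs ! i) (ys ! j)"
  shows "graph_iso V E (UNIV \<times> {..<n}) F"
proof (rule embedding_imp_graph_iso[OF F])
  let ?g = "\<lambda>(b, i). if b then ys ! i else xs ! i"
  show "?g ` (UNIV \<times> {..<n}) \<subseteq> V"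
    using rows(4,5,2,3) by (rule two_rows_image_subset)
  show "inj_on ?g (UNIV \<times> {..<n})"
    using rows(1-3) by (rule inj_on_two_rows(1))
  show "E (?g x) (?g y)" if "F x y" for x y
  proof -
    obtain b i c j where xy: "x = (b, i)" "y = (c, j)"
      by (cases x, cases y)
    have "F y x"
      using F(1) that unfolding fin_graph_def by blast
    then show ?thesis
      using that xy bipartite[OF that] hom[of i j] hom[of j i] adj_sym by (cases b) auto
  qed
qed

lemma graph_iso_K44_if_common_nbrs_4:
  assumes four: "\<And>a b c. E a b \<Longrightarrow> E b c \<Longrightarrow> a \<noteq> c \<Longrightarrow> card (common_nbrs E a c) = 4"
  shows "graph_iso V E K44_V K44_E"
proof -
  have far_adj: "E w c" if "E a b" "E b c" "a \<noteq> c" "E a w" for a b c w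
  proof -
    have "common_nbrs E a c \<subseteq> {u. E a u}" "card (common_nbrs E a c) = card {u. E a u}"
      using four[OF that(1-3)] card_nbrs[OF adj_in_V_left[OF that(1)]]
      by (auto simp: common_nbrs_def)
    then have "common_nbrs E a c = {u. E a u}"
      using finite_nbrs card_subset_eq by metis
    then show ?thesis
      using that(4) by (auto simp: common_nbrs_def)
  qed
  obtain v where "v \<in> V"
    using V_nonempty by blast
  then obtain a1 a2 a3 a4 where da: "distinct [a1, a2, a3, a4]" and N: "{u. E v u} = {a1, a2, a3, a4}"
    by (rule obtain_nbrs)
  then have "E v a1"
    by auto
  then obtain b1 b2 b3 where db: "distinct [v, b1, b2, b3]" and "E a1 b1" "E a1 b2" "E a1 b3"
    using obtain_other_nbrs adj_sym by metis
  define xs ys where "xs = [v, b1, b2, b3]" and "ys = [a1, a2, a3, a4]"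
  have cross: "E x y" if "x \<in> set xs" "y \<in> set ys" for x y
  proof (cases "x = v")
    case True
    then show ?thesis
      using that(2) N by (auto simp: ys_def)
  next
    case False
    then have "E a1 x"
      using that(1) \<open>E a1 b1\<close> \<open>E a1 b2\<close> \<open>E a1 b3\<close> by (auto simp: xs_def)
    moreover have "E v y"
      using that(2) N by (auto simp: ys_def)
    ultimately show ?thesis
      using far_adj[OF \<open>E v a1\<close>] False adj_sym by blast
  qed
  have "set xs \<inter> set ys = {}"
    using cross by (metis disjoint_iff not_adj_self)
  then have rows: "distinct (xs @ ys)" "length xs = 4" "length ys = 4"
    using da db by (auto simp: xs_def ys_def)
  have "v \<in> set xs" "a1 \<in> set ys"
    by (simp_all add: xs_def ys_def)
  then have in_V: "set xs \<subseteq> V" "set ys \<subseteq> V"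
    using cross adj_in_V_left adj_in_V_right by blast+
  show ?thesis
    unfolding K44_V_def
  proof (rule two_rows_embedding_imp_graph_iso[where xs = xs and ys = ys])
    show "fin_graph (UNIV \<times> {..<4}) K44_E" "regular (UNIV \<times> {..<4}) K44_E 4"
      using fin_graph_K44 regular_K44 by (simp_all add: K44_V_def)
    show "fst x \<noteq> fst y" if "K44_E x y" for x y
      using that by (simp add: K44_E_def)
    show "E (xs ! i) (ys ! j)" if "K44_E (False, i) (True, j)" for i j
      using that cross rows(2,3) by (simp add: K44_E_def)
  qed (fact rows in_V)+
qed

end

section \<open>Three common neighbours\<close>

locale quartic_graph_3_common_nbrs = quartic_graph +
  assumes triangle_free: "E x y \<Longrightarrow> E y z \<Longrightarrow> \<not> E x z"
    and card_common_nbrs: "E x y \<Longrightarrow> E y z \<Longrightarrow> x \<noteq> z \<Longrightarrow> card (common_nbrs E x z) = 3"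
begin

lemma two_other_common_nbrs:
  assumes "E a b" "E b c" "a \<noteq> c"
  obtains w1 w2 where "distinct [b, w1, w2]" "E a w1" "E w1 c" "E a w2" "E w2 c"
proof -
  have "b \<in> common_nbrs E a c"
    using assms by (simp add: common_nbrs_def)
  then have "card (common_nbrs E a c - {b}) = 2"
    using card_common_nbrs[OF assms] finite_common_nbrs by simp
  then show ?thesis
    using that by (auto simp: card_2_iff common_nbrs_def)
qed

lemma no_three_other_common_nbrs:
  assumes "E a b" "E b c" "a \<noteq> c" "distinct [b, w1, w2, w3]"
    "E a w1" "E w1 c" "E a w2" "E w2 c" "E a w3" "E w3 c"
  shows False
proof -
  have "{b, w1, w2, w3} \<subseteq> common_nbrs E a c"
    using assms by (simp add: common_nbrs_def)
  then have "card {b, w1, w2, w3} \<le> 3"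
    using card_common_nbrs[OF assms(1-3)] finite_common_nbrs card_mono by metis
  then show False
    using assms(4) by simp
qed

text \<open>A neighbour b \<noteq> v of a1 misses at most one of a2, a3, a4, since v and b have two
  common neighbours besides a1; and each a_q is missed by one of them, since a1 and a_q have
  only three common neighbours.\<close>

lemma obtain_second_nbrs:
  assumes da: "distinct [a1, a2, a3, a4]" and N: "{u. E v u} = {a1, a2, a3, a4}"
  obtains b2 b3 b4 where "distinct [v, b2, b3, b4]" "{u. E a1 u} = {v, b2, b3, b4}"
    "\<not> E a2 b2" "\<not> E a3 b3" "\<not> E a4 b4"
    "E a3 b2" "E a4 b2" "E a2 b3" "E a4 b3" "E a2 b4" "E a3 b4"
proof -
  have va: "E v a1" "E v a2" "E v a3" "E v a4"
    using N by auto
  obtain x y z where dxyz: "distinct [v, x, y, z]" and a1xyz: "E a1 x" "E a1 y" "E a1 z"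
    using obtain_other_nbrs[OF adj_sym[OF va(1)]] by blast
  have row: "(E a2 t \<and> E a3 t) \<or> (E a2 t \<and> E a4 t) \<or> (E a3 t \<and> E a4 t)" if t: "E a1 t" "v \<noteq> t" for t
  proof -
    obtain w1 w2 where "distinct [a1, w1, w2]" "E v w1" "E w1 t" "E v w2" "E w2 t"
      using two_other_common_nbrs[OF va(1) t] by blast
    moreover have "w1 \<in> {a1, a2, a3, a4}" "w2 \<in> {a1, a2, a3, a4}"
      using N calculation by auto
    ultimately show ?thesis
      using da by auto
  qed
  have col: "\<not> (E x q \<and> E y q \<and> E z q)" if "q \<in> {a2, a3, a4}" for q
    using no_three_other_common_nbrs[OF adj_sym[OF va(1)], of q x y z] dxyz a1xyz that va da by auto
  obtain b2 b3 b4 where b: "b2 \<in> {x, y, z}" "b3 \<in> {x, y, z}" "b4 \<in> {x, y, z}"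
    and nb: "\<not> E a2 b2" "\<not> E a3 b3" "\<not> E a4 b4"
    using col adj_sym by (metis insert_iff)
  moreover have "E a1 b" "v \<noteq> b" if "b \<in> {x, y, z}" for b
    using that a1xyz dxyz by auto
  ultimately have ab: "E a1 b2" "E a1 b3" "E a1 b4" "E a3 b2" "E a4 b2" "E a2 b3" "E a4 b3" "E a2 b4" "E a3 b4"
    and vb: "v \<noteq> b2" "v \<noteq> b3" "v \<noteq> b4"
    using row by blast+
  have "distinct [v, b2, b3, b4]"
    using vb ab nb by auto
  moreover have "{u. E a1 u} = {v, b2, b3, b4}"
    using nbrs_eq[OF calculation adj_sym[OF va(1)] ab(1-3)] .
  ultimately show ?thesis
    using that nb ab(4-9) by blast
qed

lemma obtain_K55m_labelling:
  obtains xs ys where "distinct (xs @ ys)" "length xs = 5" "length ys = 5" "set xs \<subseteq> V" "set ys \<subseteq> V"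
    "\<And>i j. i < 5 \<Longrightarrow> j < 5 \<Longrightarrow> i \<noteq> j \<Longrightarrow> E (xs ! i) (ys ! j)"
proof -
  obtain v where "v \<in> V"
    using V_nonempty by blast
  then obtain a1 a2 a3 a4 where da: "distinct [a1, a2, a3, a4]" and N: "{u. E v u} = {a1, a2, a3, a4}"
    by (rule obtain_nbrs)
  then have va: "E v a1" "E v a2" "E v a3" "E v a4"
    by auto
  obtain b2 b3 b4 where db: "distinct [v, b2, b3, b4]" and N1: "{u. E a1 u} = {v, b2, b3, b4}"
    and nb: "\<not> E a2 b2" "\<not> E a3 b3" "\<not> E a4 b4"
    and ab: "E a3 b2" "E a4 b2" "E a2 b3" "E a4 b3" "E a2 b4" "E a3 b4"
    using obtain_second_nbrs[OF da N] by blast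
  obtain b1 where "distinct [v, b3, b4, b1]" and a2b1: "E a2 b1"
    using obtain_fourth_nbr[of v b3 b4 a2] db adj_sym[OF va(2)] ab(3,5) by auto
  then have db1: "distinct [v, b1, b2, b3, b4]" and "\<not> E a1 b1"
    using N1 db nb(1) by auto
  have ab1: "E a3 b1" "E a4 b1"
  proof -
    obtain w1 w2 where "distinct [a2, w1, w2]" "E v w1" "E w1 b1" "E v w2" "E w2 b1"
      using two_other_common_nbrs[OF va(2) a2b1] db1 by auto
    moreover have "w1 \<in> {a1, a2, a3, a4}" "w2 \<in> {a1, a2, a3, a4}"
      using N calculation by auto
    ultimately show "E a3 b1" "E a4 b1"
      using \<open>\<not> E a1 b1\<close> da by auto
  qed
  obtain c where dc: "distinct [a2, a3, a4, c]" and b1c: "E b1 c"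
    using obtain_fourth_nbr[of a2 a3 a4 b1] da adj_sym a2b1 ab1 by (metis distinct_length_2_or_more)
  have "c \<noteq> a1"
    using b1c \<open>\<not> E a1 b1\<close> adj_sym by blast
  then have "\<not> E v c"
    using N dc by auto
  have N2: "{u. E a2 u} = {v, b1, b3, b4}" and N3: "{u. E a3 u} = {v, b1, b2, b4}"
    using nbrs_eq[of v b1 b3 b4 a2] nbrs_eq[of v b1 b2 b4 a3] db1 va ab a2b1 ab1 adj_sym[of v a2] adj_sym[of v a3]
    by auto
  have bc: "E b2 c" "E b3 c" "E b4 c"
  proof -
    obtain p1 p2 where "distinct [b1, p1, p2]" "E a2 p1" "E p1 c" "E a2 p2" "E p2 c"
      using two_other_common_nbrs[OF a2b1 b1c] dc by auto
    moreover have "p1 \<in> {v, b1, b3, b4}" "p2 \<in> {v, b1, b3, b4}"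
      using N2 calculation by blast+
    ultimately show "E b3 c" "E b4 c"
      using \<open>\<not> E v c\<close> by auto
    obtain q1 q2 where "distinct [b1, q1, q2]" "E a3 q1" "E q1 c" "E a3 q2" "E q2 c"
      using two_other_common_nbrs[OF ab1(1) b1c] dc by auto
    moreover have "q1 \<in> {v, b1, b2, b4}" "q2 \<in> {v, b1, b2, b4}"
      using N3 calculation by blast+
    ultimately show "E b2 c"
      using \<open>\<not> E v c\<close> by auto
  qed
  have a1b: "E a1 b2" "E a1 b3" "E a1 b4"
    using N1 by auto
  note edges = va ab a1b a2b1 ab1 b1c bc
  show ?thesis
  proof (rule that[of "[v, b1, b2, b3, b4]" "[c, a1, a2, a3, a4]"])
    show "distinct ([v, b1, b2, b3, b4] @ [c, a1, a2, a3, a4])"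
      using db1 da dc \<open>c \<noteq> a1\<close> \<open>\<not> E v c\<close> edges
      by (simp; safe; metis triangle_free adj_sym)
    show "set [v, b1, b2, b3, b4] \<subseteq> V" "set [c, a1, a2, a3, a4] \<subseteq> V"
      using edges[THEN adj_in_V_left] edges[THEN adj_in_V_right] by auto
    show "E ([v, b1, b2, b3, b4] ! i) ([c, a1, a2, a3, a4] ! j)" if "i < 5" "j < 5" "i \<noteq> j" for i j
      using that edges edges[THEN adj_sym] by (auto simp: less_Suc_eq numeral_eq_Suc)
  qed simp_all
qed

lemma graph_iso_K55m: "graph_iso V E K55m_V K55m_E"
proof -
  obtain xs ys where rows: "distinct (xs @ ys)" "length xs = 5" "length ys = 5" "set xs \<subseteq> V" "set ys \<subseteq> V"
    and cross: "\<And>i j. i < 5 \<Longrightarrow> j < 5 \<Longrightarrow> i \<noteq> j \<Longrightarrow> E (xs ! i) (ys ! j)"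
    using obtain_K55m_labelling by metis
  show ?thesis
    unfolding K55m_V_def
  proof (rule two_rows_embedding_imp_graph_iso[where xs = xs and ys = ys])
    show "fin_graph (UNIV \<times> {..<5}) K55m_E" "regular (UNIV \<times> {..<5}) K55m_E 4"
      using fin_graph_K55m regular_K55m by (simp_all add: K55m_V_def)
    show "fst x \<noteq> fst y" if "K55m_E x y" for x y
      using that by (simp add: K55m_E_def)
    show "E (xs ! i) (ys ! j)" if "K55m_E (False, i) (True, j)" for i j
      using that cross by (simp add: K55m_E_def)
  qed (fact rows)+
qed

end


section \<open>Quartic rectagraphs\<close>

text \<open>Triangle-free graphs in which any two vertices at distance two have exactly two common
  neighbours are called rectagraphs.\<close>

locale quartic_rectagraph = quartic_graph +
  assumes triangle_free: "E x y \<Longrightarrow> E y z \<Longrightarrow> \<not> E x z"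
    and card_common_nbrs: "E x y \<Longrightarrow> E y z \<Longrightarrow> x \<noteq> z \<Longrightarrow> card (common_nbrs E x z) = 2"
begin

lemma other_common_nbr:
  assumes "E x y" "E y z" "x \<noteq> z"
  obtains w where "w \<noteq> y" "E x w" "E w z"
proof -
  have "y \<in> common_nbrs E x z"
    using assms by (simp add: common_nbrs_def)
  then have "card (common_nbrs E x z - {y}) = 1"
    using card_common_nbrs[OF assms] finite_common_nbrs by simp
  then obtain w where "common_nbrs E x z - {y} = {w}"
    by (rule card_1_singletonE)
  then show ?thesis
    using that by (auto simp: common_nbrs_def)
qed

lemma other_common_nbr_unique:
  assumes "E x y" "E y z" "x \<noteq> z" "w \<noteq> y" "w' \<noteq> y" "E x w" "E w z" "E x w'" "E w' z"
  shows "w = w'"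
proof (rule ccontr)
  assume "w \<noteq> w'"
  then have "card {y, w, w'} = 3" "{y, w, w'} \<subseteq> common_nbrs E x z"
    using assms by (auto simp: common_nbrs_def)
  then have "3 \<le> card (common_nbrs E x z)"
    using card_mono[OF finite_common_nbrs] by metis
  then show False
    using card_common_nbrs[OF assms(1-3)] by simp
qed

lemma three_common_nbrs_eq:
  "E c p \<Longrightarrow> E c q \<Longrightarrow> E c r \<Longrightarrow> p \<noteq> q \<Longrightarrow> p \<noteq> r \<Longrightarrow> q \<noteq> r
    \<Longrightarrow> E p u \<Longrightarrow> E q u \<Longrightarrow> E r u \<Longrightarrow> u = c"
  using other_common_nbr_unique[of c p u q r] by auto

lemma no_third_common_nbr:
  "E c p \<Longrightarrow> E c q \<Longrightarrow> E c r \<Longrightarrow> p \<noteq> q \<Longrightarrow> p \<noteq> r \<Longrightarrow> q \<noteq> r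
    \<Longrightarrow> E p u \<Longrightarrow> E q u \<Longrightarrow> u \<noteq> c \<Longrightarrow> \<not> E r u"
  using three_common_nbrs_eq by blast

text \<open>The ball of radius two around v: its neighbours a_i, and u_ij, the common neighbour of
  a_i and a_j other than v.\<close>

definition ball2 where
  "ball2 v a1 a2 a3 a4 u12 u13 u14 u23 u24 u34 \<longleftrightarrow> distinct [a1, a2, a3, a4] \<and>
     E v a1 \<and> E v a2 \<and> E v a3 \<and> E v a4 \<and>
     E a1 u12 \<and> E a2 u12 \<and> E a1 u13 \<and> E a3 u13 \<and> E a1 u14 \<and> E a4 u14 \<and>
     E a2 u23 \<and> E a3 u23 \<and> E a2 u24 \<and> E a4 u24 \<and> E a3 u34 \<and> E a4 u34 \<and>
     u12 \<noteq> v \<and> u13 \<noteq> v \<and> u14 \<noteq> v \<and> u23 \<noteq> v \<and> u24 \<noteq> v \<and> u34 \<noteq> v"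

lemma ball2_perm:
  assumes "ball2 v a1 a2 a3 a4 u12 u13 u14 u23 u24 u34"
  shows "ball2 v a1 a3 a2 a4 u13 u12 u14 u23 u34 u24"
    and "ball2 v a2 a3 a1 a4 u23 u12 u24 u13 u34 u14"
    and "ball2 v a1 a2 a4 a3 u12 u14 u13 u24 u23 u34"
    and "ball2 v a1 a4 a2 a3 u14 u12 u13 u24 u34 u23"
    and "ball2 v a1 a3 a4 a2 u13 u14 u12 u34 u23 u24"
    and "ball2 v a1 a4 a3 a2 u14 u13 u12 u34 u24 u23"
  using assms unfolding ball2_def by auto

lemma ball2_adj:
  assumes "ball2 v a1 a2 a3 a4 u12 u13 u14 u23 u24 u34"
  shows "E v a1" "E v a2" "E v a3" "E v a4"
    "E a1 u12" "E a2 u12" "E a1 u13" "E a3 u13" "E a1 u14" "E a4 u14"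
    "E a2 u23" "E a3 u23" "E a2 u24" "E a4 u24" "E a3 u34" "E a4 u34"
  using assms unfolding ball2_def by auto

lemma ball2_non_adj:
  assumes "ball2 v a1 a2 a3 a4 u12 u13 u14 u23 u24 u34"
  shows "\<not> E a3 u12" "\<not> E a4 u12" "\<not> E a2 u13" "\<not> E a4 u13" "\<not> E a2 u14" "\<not> E a3 u14"
    "\<not> E a1 u23" "\<not> E a4 u23" "\<not> E a1 u24" "\<not> E a3 u24" "\<not> E a1 u34" "\<not> E a2 u34"
  using assms unfolding ball2_def by (simp; metis no_third_common_nbr)+

lemma ball2_distinct:
  assumes "ball2 v a1 a2 a3 a4 u12 u13 u14 u23 u24 u34"
  shows "distinct [v, a1, a2, a3, a4, u12, u13, u14, u23, u24, u34]"
  using assms ball2_adj[OF assms] ball2_non_adj[OF assms] unfolding ball2_def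
  by (simp; safe; metis triangle_free adj_sym)

lemma ball2_triple_flip:
  assumes B: "ball2 v a1 a2 a3 a4 u12 u13 u14 u23 u24 u34"
    and W: "E W u12" "E W u13" "E W u23"
  obtains X where "E X u12" "E X u14" "E X u24"
proof -
  note adj = ball2_adj[OF B] and non = ball2_non_adj[OF B] and dist = ball2_distinct[OF B]
  have "W \<noteq> a1" "W \<noteq> a2"
    using W non by auto
  have "\<not> E W u14" "\<not> E W u24"
    using no_third_common_nbr[OF adj(5,7,9), of W] no_third_common_nbr[OF adj(6,11,13), of W]
      W[THEN adj_sym] dist \<open>W \<noteq> a1\<close> \<open>W \<noteq> a2\<close> adj_sym by auto
  obtain t where "distinct [a1, a2, W, t]" "E u12 t"
    using obtain_fourth_nbr[of a1 a2 W u12] adj(5,6)[THEN adj_sym] W(1)[THEN adj_sym] \<open>W \<noteq> a1\<close> \<open>W \<noteq> a2\<close> dist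
    by auto
  then have only_t: "y = t" if "E u12 y" "y \<notin> {a1, a2, W}" for y
    using nbr_cases[of a1 a2 W t u12 y] adj(5,6)[THEN adj_sym] W(1)[THEN adj_sym] that by auto
  obtain X where "X \<noteq> a1" "E u12 X" "E X u14"
    using other_common_nbr[OF adj(5)[THEN adj_sym] adj(9)] dist by auto
  then have "E t u14"
    using only_t[of X] non(5) \<open>\<not> E W u14\<close> by auto
  obtain Y where "Y \<noteq> a2" "E u12 Y" "E Y u24"
    using other_common_nbr[OF adj(6)[THEN adj_sym] adj(13)] dist by auto
  then have "E t u24"
    using only_t[of Y] non(9) \<open>\<not> E W u24\<close> by auto
  then show ?thesis
    using that \<open>E u12 t\<close> \<open>E t u14\<close> adj_sym by blast
qed

lemma ball2_skew_nbr:
  assumes B: "ball2 v a1 a2 a3 a4 u12 u13 u14 u23 u24 u34"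
    and X: "E X u12" "E X u13" "X \<noteq> a1" "\<not> E X u23"
  shows "E X u24"
proof -
  note adj = ball2_adj[OF B] and non = ball2_non_adj[OF B] and dist = ball2_distinct[OF B]
  have "X \<noteq> a2"
    using X non by auto
  obtain t where "distinct [a1, a2, X, t]" "E u12 t"
    using obtain_fourth_nbr[of a1 a2 X u12] adj(5,6)[THEN adj_sym] X(1)[THEN adj_sym] X(3) \<open>X \<noteq> a2\<close> dist
    by auto
  then have only_t: "y = t" if "E u12 y" "y \<notin> {a1, a2, X}" for y
    using nbr_cases[of a1 a2 X t u12 y] adj(5,6)[THEN adj_sym] X(1)[THEN adj_sym] that by auto
  obtain Y where "Y \<noteq> a2" "E u12 Y" "E Y u23"
    using other_common_nbr[OF adj(6)[THEN adj_sym] adj(11)] dist by auto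
  then have "E t u23"
    using only_t[of Y] non(7) X(4) by auto
  obtain Z where Z: "Z \<noteq> a2" "E u12 Z" "E Z u24"
    using other_common_nbr[OF adj(6)[THEN adj_sym] adj(13)] dist by auto
  have "Z \<noteq> t"
  proof
    assume "Z = t"
    then have "t = a2"
      using three_common_nbrs_eq[OF adj(6,11,13), of t] dist \<open>E u12 t\<close> \<open>E t u23\<close> Z(3) adj_sym by auto
    then show False
      using \<open>distinct [a1, a2, X, t]\<close> by simp
  qed
  then show ?thesis
    using only_t[of Z] Z non(9) by auto
qed

lemma ball2_top_adj:
  assumes B: "ball2 v a1 a2 a3 a4 u12 u13 u14 u23 u24 u34"
    and W: "E W u12" "E W u13" "E W u23" and W': "E W' u12" "E W' u14" "E W' u24"
    and z: "E W z" "z \<notin> {u12, u13, u23}"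
  shows "E W' z"
proof -
  note adj = ball2_adj[OF B] and non = ball2_non_adj[OF B] and dist = ball2_distinct[OF B]
  have "W \<noteq> a1" "W \<noteq> a2" "W' \<noteq> a1" "W' \<noteq> a2"
    using W W' non by auto
  have "\<not> E W u14" "\<not> E W u24"
    using no_third_common_nbr[OF adj(5,7,9), of W] no_third_common_nbr[OF adj(6,11,13), of W]
      W[THEN adj_sym] dist \<open>W \<noteq> a1\<close> \<open>W \<noteq> a2\<close> adj_sym by auto
  then have "distinct [a1, a2, W, W']"
    using W' dist \<open>W \<noteq> a1\<close> \<open>W \<noteq> a2\<close> \<open>W' \<noteq> a1\<close> \<open>W' \<noteq> a2\<close> by auto
  then have nbrs_u12: "y \<in> {a1, a2, W, W'}" if "E u12 y" for y
    using nbr_cases[of a1 a2 W W' u12 y] adj(5,6)[THEN adj_sym] W(1)[THEN adj_sym] W'(1)[THEN adj_sym] that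
    by auto
  have "\<not> E W v"
    using three_common_nbrs_eq[of u12 a1 a2 W v] adj(1,2,5,6) W(1) \<open>distinct [a1, a2, W, W']\<close> dist adj_sym
    by auto
  have "z \<noteq> u12"
    using z(2) by simp
  then obtain y where y: "y \<noteq> W" "E u12 y" "E y z"
    using other_common_nbr[OF W(1)[THEN adj_sym] z(1)] by blast
  have "y \<noteq> a1"
  proof
    assume "y = a1"
    then have "z \<in> {v, u12, u13, u14}"
      using nbr_cases[of v u12 u13 u14 a1 z] adj(1,5,7,9) y(3) dist adj_sym by auto
    then show False
      using z \<open>\<not> E W v\<close> \<open>\<not> E W u14\<close> by auto
  qed
  moreover have "y \<noteq> a2"
  proof
    assume "y = a2"
    then have "z \<in> {v, u12, u23, u24}"
      using nbr_cases[of v u12 u23 u24 a2 z] adj(2,6,11,13) y(3) dist adj_sym by auto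
    then show False
      using z \<open>\<not> E W v\<close> \<open>\<not> E W u24\<close> by auto
  qed
  ultimately have "y = W'"
    using nbrs_u12[OF y(2)] y(1) by auto
  then show ?thesis
    using y(3) by simp
qed

lemma ball2_cube_completion:
  assumes B: "ball2 v a1 a2 a3 a4 u12 u13 u14 u23 u24 u34"
    and X: "E X u12" "E X u13" "E X u23"
  obtains W124 W134 W234 z where "E W124 u12" "E W124 u14" "E W124 u24"
    "E W134 u13" "E W134 u14" "E W134 u34" "E W234 u23" "E W234 u24" "E W234 u34"
    "E X z" "z \<notin> {u12, u13, u23}" "E W124 z" "E W134 z" "E W234 z"
proof -
  obtain W124 where W124: "E W124 u12" "E W124 u14" "E W124 u24"
    using ball2_triple_flip[OF B X] .
  obtain W134 where W134: "E W134 u13" "E W134 u14" "E W134 u34"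
    using ball2_triple_flip[OF ball2_perm(1)[OF B] X(2,1,3)] .
  obtain W234 where W234: "E W234 u23" "E W234 u24" "E W234 u34"
    using ball2_triple_flip[OF ball2_perm(2)[OF B] X(3,1,2)] .
  obtain z where "distinct [u12, u13, u23, z]" "E X z"
    using obtain_fourth_nbr[of u12 u13 u23 X] X ball2_distinct[OF B] by auto
  then have "z \<notin> {u12, u13, u23}" "E W124 z" "E W134 z" "E W234 z"
    using ball2_top_adj[OF B X W124] ball2_top_adj[OF ball2_perm(1)[OF B] X(2,1,3) W134]
      ball2_top_adj[OF ball2_perm(2)[OF B] X(3,1,2) W234] by auto
  then show ?thesis
    using that W124 W134 W234 \<open>E X z\<close> by blast
qed

text \<open>In ws the vertex at position binary_value xs is the image of xs \<in> Q4_V: a_i is the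
  i-th unit vector, u_ij = a_i + a_j, W_ijk = a_i + a_j + a_k (with W123 = X) and z the
  all-ones vector.\<close>

lemma graph_iso_Q4_if_triple:
  assumes B: "ball2 v a1 a2 a3 a4 u12 u13 u14 u23 u24 u34"
    and X: "X \<noteq> a1" "E X u12" "E X u13" "E X u23"
  shows "graph_iso V E Q4_V Q4_E"
proof -
  obtain W124 W134 W234 z where W: "E W124 u12" "E W124 u14" "E W124 u24"
    "E W134 u13" "E W134 u14" "E W134 u34" "E W234 u23" "E W234 u24" "E W234 u34"
    and z: "E X z" "z \<notin> {u12, u13, u23}" "E W124 z" "E W134 z" "E W234 z"
    using ball2_cube_completion[OF B X(2-4)] by blast
  note edges = ball2_adj[OF B] X(2-4) W z(1,3-5)
  define ws where "ws = [v, a4, a3, u34, a2, u24, u23, W234, a1, u14, u13, W134, u12, W124, X, z]"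
  have "distinct ws"
    using ball2_distinct[OF B] ball2_non_adj[OF B] X(1) z(2) edges edges[THEN adj_sym] unfolding ws_def
    by (simp; safe; metis triangle_free three_common_nbrs_eq)
  show ?thesis
  proof (rule embedding_imp_graph_iso[OF fin_graph_Q4 regular_Q4])
    have "set ws \<subseteq> V" "length ws = 16"
      using edges[THEN adj_in_V_left] edges[THEN adj_in_V_right] by (auto simp: ws_def)
    then show "(\<lambda>xs. ws ! binary_value xs) ` Q4_V \<subseteq> V"
      using binary_value_Q4 nth_mem by fastforce
    have "inj_on (nth ws) (binary_value ` Q4_V)"
      using inj_on_nth[OF \<open>distinct ws\<close>] binary_value_Q4 \<open>length ws = 16\<close> by auto
    then show "inj_on (\<lambda>xs. ws ! binary_value xs) Q4_V"
      using comp_inj_on[OF inj_on_binary_value_Q4] by (simp add: comp_def)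
    have flips: "\<forall>y \<in> {[\<not> a, b, c, d], [a, \<not> b, c, d], [a, b, \<not> c, d], [a, b, c, \<not> d]}.
        E (ws ! binary_value [a, b, c, d]) (ws ! binary_value y)" for a b c d
      by (cases a; cases b; cases c; cases d) (simp_all add: ws_def binary_value_4 edges edges[THEN adj_sym])
    show "E (ws ! binary_value x) (ws ! binary_value y)" if "Q4_E x y" for x y
    proof -
      have "length x = 4"
        using that by (simp add: Q4_E_def)
      then obtain a b c d where "x = [a, b, c, d]"
        by (auto simp: length_4_iff)
      then show ?thesis
        using that flips by (auto simp: Q4_E_iff)
    qed
  qed
qed

text \<open>When X misses u23 it is one of three vertices X, Y, Z at distance three from v; each
  of them misses the two u_ij of one splitting of {1, 2, 3, 4} into two pairs.\<close>

lemma ball2_skew_completion: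
  assumes B: "ball2 v a1 a2 a3 a4 u12 u13 u14 u23 u24 u34"
    and X: "X \<noteq> a1" "E X u12" "E X u13" "\<not> E X u23"
  obtains Y Z where "E X u24" "E X u34"
    "Y \<noteq> a1" "E Y u12" "E Y u14" "E Y u23" "E Y u34" "\<not> E Y u24"
    "Z \<noteq> a1" "E Z u13" "E Z u14" "E Z u23" "E Z u24" "\<not> E Z u34"
proof -
  note adj = ball2_adj[OF B] and non = ball2_non_adj[OF B] and dist = ball2_distinct[OF B]
  have no_triple: False if "E X' u12" "E X' u13" "E X' u23" for X'
  proof -
    have "X' \<noteq> a1"
      using that(3) non(7) by auto
    then have "X' = X"
      using other_common_nbr_unique[OF adj(5)[THEN adj_sym] adj(7) _ _ X(1)] that(1,2)[THEN adj_sym]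
        that(2) X(2)[THEN adj_sym] X(3) dist
      by auto
    then show False
      using that(3) X(4) by simp
  qed
  obtain Y where Y0: "Y \<noteq> a1" "E u12 Y" "E Y u14"
    using other_common_nbr[OF adj(5)[THEN adj_sym] adj(9)] dist by auto
  then have Y: "Y \<noteq> a1" "E Y u12" "E Y u14"
    using adj_sym[OF Y0(2)] by simp_all
  have "\<not> E Y u24"
  proof
    assume "E Y u24"
    then show False
      using ball2_triple_flip[OF ball2_perm(3)[OF B] Y(2,3)] no_triple by blast
  qed
  obtain Z where Z0: "Z \<noteq> a1" "E u13 Z" "E Z u14"
    using other_common_nbr[OF adj(7)[THEN adj_sym] adj(9)] dist by auto
  then have Z: "Z \<noteq> a1" "E Z u13" "E Z u14"
    using adj_sym[OF Z0(2)] by simp_all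
  have "\<not> E Z u34"
  proof
    assume "E Z u34"
    then show False
      using ball2_triple_flip[OF ball2_perm(5)[OF B] Z(2,3)] no_triple by blast
  qed
  show ?thesis
  proof (rule that)
    show "E X u24" "E X u34"
      using ball2_skew_nbr[OF B X(2,3,1,4)] ball2_skew_nbr[OF ball2_perm(1)[OF B] X(3,2,1,4)] by auto
    show "E Y u23" "E Y u34"
      using ball2_skew_nbr[OF ball2_perm(3)[OF B] Y(2,3,1) \<open>\<not> E Y u24\<close>]
        ball2_skew_nbr[OF ball2_perm(4)[OF B] Y(3,2,1) \<open>\<not> E Y u24\<close>] by auto
    show "E Z u23" "E Z u24"
      using ball2_skew_nbr[OF ball2_perm(5)[OF B] Z(2,3,1) \<open>\<not> E Z u34\<close>]
        ball2_skew_nbr[OF ball2_perm(6)[OF B] Z(3,2,1) \<open>\<not> E Z u34\<close>] by auto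
  qed (fact Y Z \<open>\<not> E Y u24\<close> \<open>\<not> E Z u34\<close>)+
qed

text \<open>The colour classes are {v, u_ij} (points) and {a_i, X, Y, Z} (lines); the order of the
  two lists matches the labelling of the Fano plane in fano_inc.\<close>

lemma graph_iso_BCH_if_no_triple:
  assumes B: "ball2 v a1 a2 a3 a4 u12 u13 u14 u23 u24 u34"
    and X: "X \<noteq> a1" "E X u12" "E X u13" "\<not> E X u23"
  shows "graph_iso V E BCH_V BCH_E"
proof -
  obtain Y Z where X': "E X u24" "E X u34"
    and Y: "Y \<noteq> a1" "E Y u12" "E Y u14" "E Y u23" "E Y u34" "\<not> E Y u24"
    and Z: "Z \<noteq> a1" "E Z u13" "E Z u14" "E Z u23" "E Z u24" "\<not> E Z u34"
    using ball2_skew_completion[OF B X] by blast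
  note edges = ball2_adj[OF B] X(2,3) X' Y(2-5) Z(2-5)
  define ps ls where "ps = [v, u23, u34, u14, u24, u13, u12]" and "ls = [X, a1, a2, a3, Y, a4, Z]"
  have rows: "distinct (ps @ ls)" "length ps = 7" "length ls = 7"
    using ball2_distinct[OF B] ball2_non_adj[OF B] X(1,4) Y(1,6) Z(1,6) edges edges[THEN adj_sym]
    unfolding ps_def ls_def by (simp; safe; metis triangle_free three_common_nbrs_eq)+
  have in_V: "set ps \<subseteq> V" "set ls \<subseteq> V"
    using edges[THEN adj_in_V_left] edges[THEN adj_in_V_right] by (auto simp: ps_def ls_def)
  have lt7: "k = 0 \<or> k = 1 \<or> k = 2 \<or> k = 3 \<or> k = 4 \<or> k = 5 \<or> k = 6" if "k < 7" for k :: nat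
    using that by presburger
  show ?thesis
    unfolding BCH_V_def
  proof (rule two_rows_embedding_imp_graph_iso[where xs = ps and ys = ls])
    show "fin_graph (UNIV \<times> {..<7}) BCH_E" "regular (UNIV \<times> {..<7}) BCH_E 4"
      using fin_graph_BCH regular_BCH by (simp_all add: BCH_V_def)
    show "fst x \<noteq> fst y" if "BCH_E x y" for x y
      using that by (auto simp: BCH_E_def)
    show "E (ps ! i) (ls ! j)" if "BCH_E (False, i) (True, j)" for i j
    proof -
      have "i < 7" "j < 7" "\<not> fano_inc i j"
        using that by (simp_all add: BCH_E_def)
      then show ?thesis
        using lt7[OF \<open>i < 7\<close>] lt7[OF \<open>j < 7\<close>]
        by (elim disjE) (simp_all add: fano_inc_def ps_def ls_def edges edges[THEN adj_sym])
    qed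
  qed (fact rows in_V)+
qed

lemma graph_iso_Q4_or_BCH: "graph_iso V E Q4_V Q4_E \<or> graph_iso V E BCH_V BCH_E"
proof -
  obtain v where "v \<in> V"
    using V_nonempty by blast
  then obtain a1 a2 a3 a4 where d: "distinct [a1, a2, a3, a4]" and N: "{u. E v u} = {a1, a2, a3, a4}"
    by (rule obtain_nbrs)
  have a: "E a1 v" "E v a2" "E a2 v" "E v a3" "E a3 v" "E v a4"
    using N adj_sym by auto
  obtain u12 where "u12 \<noteq> v" "E a1 u12" "E u12 a2"
    using other_common_nbr[OF a(1,2)] d by auto
  moreover obtain u13 where "u13 \<noteq> v" "E a1 u13" "E u13 a3"
    using other_common_nbr[OF a(1,4)] d by auto
  moreover obtain u14 where "u14 \<noteq> v" "E a1 u14" "E u14 a4"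
    using other_common_nbr[OF a(1,6)] d by auto
  moreover obtain u23 where "u23 \<noteq> v" "E a2 u23" "E u23 a3"
    using other_common_nbr[OF a(3,4)] d by auto
  moreover obtain u24 where "u24 \<noteq> v" "E a2 u24" "E u24 a4"
    using other_common_nbr[OF a(3,6)] d by auto
  moreover obtain u34 where "u34 \<noteq> v" "E a3 u34" "E u34 a4"
    using other_common_nbr[OF a(5,6)] d by auto
  ultimately have B: "ball2 v a1 a2 a3 a4 u12 u13 u14 u23 u24 u34"
    using d N adj_sym unfolding ball2_def by auto
  obtain X where "X \<noteq> a1" "E u12 X" "E X u13"
    using other_common_nbr[OF ball2_adj(5)[OF B, THEN adj_sym] ball2_adj(7)[OF B]] ball2_distinct[OF B]
    by auto
  then show ?thesis
    using graph_iso_Q4_if_triple[OF B] graph_iso_BCH_if_no_triple[OF B] adj_sym by blast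
qed

end

section \<open>The classification\<close>

context quartic_graph
begin

lemma classification_with_triangle:
  assumes "two_arc_transitive V E" "E x y" "E y z" "E z x"
  shows "girth V E = 3 \<and> graph_iso V E K5_V K5_E"
proof
  show "girth V E = 3"
    using assms(2-4) by (rule girth_3_if_triangle)
  have "two_arc E x y z"
    using assms(2-4) adj_imp_neq by (auto simp: two_arc_def)
  show "graph_iso V E K5_V K5_E"
  proof (rule graph_iso_K5_if_locally_complete)
    fix a b c assume "E b a" "E b c" "a \<noteq> c"
    then have "two_arc E a b c"
      using adj_sym by (auto simp: two_arc_def)
    then show "E a c"
      using two_arc_transitive_invariants(1)[OF graph assms(1) \<open>two_arc E x y z\<close>] adj_sym[OF assms(4)]
      by blast
  qed
qed

lemma card_common_nbrs_uniform:
  assumes "two_arc_transitive V E" "distinct [x0, x1, x2, x3]"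
    and "E x0 x1" "E x1 x2" "E x2 x3" "E x3 x0"
  obtains m where "m \<in> {2, 3, 4}"
    "\<And>a b c. E a b \<Longrightarrow> E b c \<Longrightarrow> a \<noteq> c \<Longrightarrow> card (common_nbrs E a c) = m"
proof -
  define m where "m = card (common_nbrs E x0 x2)"
  have "two_arc E x0 x1 x2"
    using assms(2-4) by (auto simp: two_arc_def)
  then have all_m: "card (common_nbrs E a c) = m" if "E a b" "E b c" "a \<noteq> c" for a b c
    using two_arc_transitive_invariants(2)[OF graph assms(1)] that by (auto simp: two_arc_def m_def)
  have "{x1, x3} \<subseteq> common_nbrs E x0 x2"
    using assms(3,4) adj_sym[OF assms(5)] adj_sym[OF assms(6)] by (simp add: common_nbrs_def)
  then have "card {x1, x3} \<le> m"
    unfolding m_def by (rule card_mono[OF finite_common_nbrs])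
  then have "2 \<le> m"
    using assms(2) by simp
  have "common_nbrs E x0 x2 \<subseteq> {u. E x0 u}"
    by (auto simp: common_nbrs_def)
  then have "m \<le> 4"
    unfolding m_def using card_mono[OF finite_nbrs] card_nbrs[OF adj_in_V_left[OF assms(3)]] by metis
  then show ?thesis
    using that[of m] all_m \<open>2 \<le> m\<close> by force
qed

lemma classification_triangle_free:
  assumes "two_arc_transitive V E" and triangle_free: "\<And>x y z. E x y \<Longrightarrow> E y z \<Longrightarrow> \<not> E x z"
    and "is_cycle V E n c" "n \<le> 4"
  shows "girth V E = 4 \<and> ((graph_iso V E K44_V K44_E \<and> graph_iso V E C41_V C41_E)
    \<or> graph_iso V E K55m_V K55m_E \<or> graph_iso V E Q4_V Q4_E \<or> graph_iso V E BCH_V BCH_E)"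
proof -
  have "n \<noteq> 3"
    using assms(3) triangle_if_is_cycle_3 triangle_free adj_sym by metis
  then have "n = 4"
    using assms(3,4) by (simp add: is_cycle_def)
  then have "is_cycle V E 4 c"
    using assms(3) by simp
  then have "girth V E = 4"
    using triangle_free by (metis girth_4_if_triangle_free)
  obtain m where "m \<in> {2, 3, 4}"
    and all_m: "\<And>a b c. E a b \<Longrightarrow> E b c \<Longrightarrow> a \<noteq> c \<Longrightarrow> card (common_nbrs E a c) = m"
    using card_common_nbrs_uniform[OF assms(1)] square_if_is_cycle_4[OF \<open>is_cycle V E 4 c\<close>] by blast
  then consider "m = 2" | "m = 3" | "m = 4"
    by blast
  then show ?thesis
  proof cases
    case 1
    interpret quartic_rectagraph V E
      using triangle_free all_m 1 by unfold_locales auto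
    show ?thesis
      using graph_iso_Q4_or_BCH \<open>girth V E = 4\<close> by blast
  next
    case 2
    interpret quartic_graph_3_common_nbrs V E
      using triangle_free all_m 2 by unfold_locales auto
    show ?thesis
      using graph_iso_K55m \<open>girth V E = 4\<close> by blast
  next
    case 3
    then have "graph_iso V E K44_V K44_E"
      using graph_iso_K44_if_common_nbrs_4 all_m by blast
    then show ?thesis
      using graph_iso_trans[OF _ graph_iso_K44_C41] \<open>girth V E = 4\<close> by blast
  qed
qed

end

theorem lemma4p1:
  fixes V :: "'a set" and E :: "'a \<Rightarrow> 'a \<Rightarrow> bool"
  assumes "fin_graph V E"
    and "connected_graph V E"
    and "regular V E 4"
    and "two_arc_transitive V E"
    and "girth V E \<le> 4"
  shows "(girth V E = 3 \<and> graph_iso V E K5_V K5_E)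
       \<or> (girth V E = 4 \<and> graph_iso V E K44_V K44_E \<and> graph_iso V E C41_V C41_E)
       \<or> (girth V E = 4 \<and> (graph_iso V E K55m_V K55m_E \<or> graph_iso V E Q4_V Q4_E
                              \<or> graph_iso V E BCH_V BCH_E))"
proof -
  interpret quartic_graph V E
    using assms(1-3) by unfold_locales
  obtain n c where "is_cycle V E n c" "n \<le> 4"
    using cycle_of_length_le_4[OF assms(5)] .
  show ?thesis
  proof (cases "\<exists>x y z. E x y \<and> E y z \<and> E z x")
    case True
    then show ?thesis
      using classification_with_triangle[OF assms(4)] by blast
  next
    case False
    then have "\<And>x y z. E x y \<Longrightarrow> E y z \<Longrightarrow> \<not> E x z"
      using adj_sym by blast
    then show ?thesis
      using classification_triangle_free[OF assms(4) _ \<open>is_cycle V E n c\<close> \<open>n \<le> 4\<close>] by blast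
  qed
qed

end
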